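(* For any $\varepsilon>0$ there exist $\beta>1$ and $n_0$ such that every graph $G$ on $n\ge n_0$ vertices with $(\beta,\beta^{-1})$-expansion satisfies $\mathrm{spr}(G)<1/4+\varepsilon$.
   Context: For $T\subseteq V$, $N(T)$ is the set of vertices adjacent to some vertex of $T$. A graph $G=(V,E)$ has $(\beta,\eta)$-expansion if every $T\subset V$ with $|T|\le(1-\eta)|V|/\beta$ satisfies $|T\cup N(T)|\ge\beta|T|$. A Lipschitz function on $G$ is $f:V\to\mathbb{R}$ with $|f(v)-f(w)|\le1$ for adjacent $v,w$; $\mathrm{Var}(f)$ is the variance of $f(X)$ for $X$ uniform on $V$; $\mathrm{spr}(G)$ is the supremum of $\mathrm{Var}(f)$ over Lipschitz $f$. *)

theory Defs
  imports "HOL-Analysis.Analysis" "HOL-Library.Extended_Real"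
begin

definition simple_graph :: "'a set \<Rightarrow> ('a \<Rightarrow> 'a \<Rightarrow> bool) \<Rightarrow> bool" where
  "simple_graph V E \<longleftrightarrow> finite V \<and> (\<forall>v w. E v w \<longrightarrow> v \<in> V \<and> w \<in> V)
      \<and> (\<forall>v w. E v w \<longrightarrow> E w v) \<and> (\<forall>v. \<not> E v v)"

definition nbhd :: "'a set \<Rightarrow> ('a \<Rightarrow> 'a \<Rightarrow> bool) \<Rightarrow> 'a set \<Rightarrow> 'a set" where
  "nbhd V E T = {v \<in> V. \<exists>t\<in>T. E t v}"

definition has_expansion :: "'a set \<Rightarrow> ('a \<Rightarrow> 'a \<Rightarrow> bool) \<Rightarrow> real \<Rightarrow> real \<Rightarrow> bool" where
  "has_expansion V E \<beta> \<eta> \<longleftrightarrow>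
     (\<forall>T. T \<subseteq> V \<and> real (card T) \<le> (1 - \<eta>) * real (card V) / \<beta>
        \<longrightarrow> real (card (T \<union> nbhd V E T)) \<ge> \<beta> * real (card T))"

definition lipschitz_graph :: "'a set \<Rightarrow> ('a \<Rightarrow> 'a \<Rightarrow> bool) \<Rightarrow> ('a \<Rightarrow> real) \<Rightarrow> bool" where
  "lipschitz_graph V E f \<longleftrightarrow> (\<forall>v\<in>V. \<forall>w\<in>V. E v w \<longrightarrow> \<bar>f v - f w\<bar> \<le> 1)"

definition unif_var :: "'a set \<Rightarrow> ('a \<Rightarrow> real) \<Rightarrow> real" where
  "unif_var V f = (let m = (\<Sum>v\<in>V. f v) / real (card V) in
                    (\<Sum>v\<in>V. (f v - m)^2) / real (card V))"

definition spr :: "'a set \<Rightarrow> ('a \<Rightarrow> 'a \<Rightarrow> bool) \<Rightarrow> ereal" where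
  "spr V E = (SUP f\<in>{f. lipschitz_graph V E f}. ereal (unif_var V f))"

end

theory Submission
  imports Defs
begin

text \<open>Let f be Lipschitz on a graph with n vertices and (\<beta>, 1/\<beta>)-expansion, and pick a
  threshold x with at most n/\<beta> + \<beta> values of f below x and fewer than (1 - 1/\<beta>) n - \<beta>
  above it. For y \<ge> x the set {f > y} contains {f > y + 1} together with its neighbourhood, and
  it is too small for the alternative "closure of size (1 - 1/\<beta>) n - \<beta>" that expansion leaves
  open, so |{f > y + 1}| \<le> |{f > y}| / \<beta>; symmetrically below x. Hence both tails of f - x
  decay geometrically with ratio 1/\<beta>, and the layer-cake bound
  (t - 1/2)^2 \<le> 1/4 + \<Sum>k (2k + 2) [t > k + 1] (and its mirror image) gives
  \<Sum>v (f v - x - 1/2)^2 \<le> n/4 + 8n/\<beta> + 4\<beta>, which bounds the variance by 1/4 + O(1/\<beta> + \<beta>/n).\<close>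

lemma weighted_geometric_sum_le:
  fixes \<beta> :: real
  assumes "4 \<le> \<beta>"
  shows "(\<Sum>k<K. (2 * real k + 2) / \<beta> ^ k) \<le> 4"
proof -
  have "(2 * real k + 2) / \<beta> ^ k \<le> 2 * (1/2) ^ k" for k
  proof -
    have "real (Suc k) \<le> real (2 ^ k)"
      by (rule of_nat_mono, rule Suc_leI, rule less_exp)
    then have "(2 * real k + 2) / \<beta> ^ k \<le> 2 * 2 ^ k / 4 ^ k"
      using assms by (intro frac_le power_mono) auto
    moreover have "(4::real) ^ k = 2 ^ k * 2 ^ k"
      by (simp flip: power_mult_distrib)
    ultimately show ?thesis by (simp add: power_divide)
  qed
  then have "(\<Sum>k<K. (2 * real k + 2) / \<beta> ^ k) \<le> 2 * (\<Sum>k<K. (1/2::real) ^ k)"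
    by (simp add: sum_distrib_left sum_mono)
  also have "\<dots> \<le> 4"
    using geometric_sum_less[of "1/2::real" "{..<K}"] by simp
  finally show ?thesis .
qed

lemma square_le_layer_sum:
  fixes t :: real
  assumes "0 \<le> t" and "t \<le> real K + 1/2"
  shows "t\<^sup>2 \<le> 1/4 + (\<Sum>k<K. (2 * real k + 2) * of_bool (real k + 1/2 < t))"
proof -
  define j where "j = nat \<lceil>t - 1/2\<rceil>"
  have j: "real j - 1/2 < t" "t \<le> real j + 1/2"
    unfolding j_def using assms(1) by linarith+
  have "j \<le> K" unfolding j_def using assms(2) by linarith
  then have "{k. k < K \<and> real k + 1/2 < t} = {..<j}"
    using j by (auto; linarith)
  then have "(\<Sum>k<K. (2 * real k + 2) * of_bool (real k + 1/2 < t)) = (\<Sum>k<j. 2 * real k + 2)"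
    by (simp add: sum.inter_filter[symmetric] of_bool_def if_distrib cong: if_cong)
  also have "\<dots> = (real j + 1/2)\<^sup>2 - 1/4"
    by (induction j) (auto simp: power2_eq_square algebra_simps)
  finally show ?thesis
    using power_mono[OF j(2) assms(1), of 2] by simp
qed

lemma square_le_two_sided_layer_sum:
  fixes e :: real
  assumes "\<bar>e\<bar> \<le> real K + 1/2"
  shows "e\<^sup>2 \<le> 1/4 + (\<Sum>k<K. (2 * real k + 2) * of_bool (real k + 1/2 < e))
                    + (\<Sum>k<K. (2 * real k + 2) * of_bool (real k + 1/2 < - e))"
proof -
  have "of_bool (real k + 1/2 < \<bar>e\<bar>) = (of_bool (real k + 1/2 < e) + of_bool (real k + 1/2 < - e) :: real)"
    for k by auto
  then show ?thesis
    using square_le_layer_sum[OF abs_ge_zero assms]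
    by (simp only: power2_abs distrib_left sum.distrib add.assoc)
qed

lemma sum_weighted_indicator_swap:
  fixes w :: "nat \<Rightarrow> real"
  assumes "finite V"
  shows "(\<Sum>v\<in>V. \<Sum>k\<in>I. w k * of_bool (P v k)) = (\<Sum>k\<in>I. w k * real (card {v\<in>V. P v k}))"
proof -
  have "(\<Sum>v\<in>V. \<Sum>k\<in>I. w k * of_bool (P v k)) = (\<Sum>k\<in>I. w k * (\<Sum>v\<in>V. of_bool (P v k)))"
    by (subst sum.swap) (simp only: sum_distrib_left)
  also have "\<dots> = (\<Sum>k\<in>I. w k * real (card {v\<in>V. P v k}))"
    using assms by (simp add: Int_def)
  finally show ?thesis .
qed

lemma weighted_tail_sum_le:
  fixes \<beta> C :: real and a :: "nat \<Rightarrow> real"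
  assumes "4 \<le> \<beta>" and "0 \<le> C" and "\<And>k. a k * \<beta> ^ k \<le> C"
  shows "(\<Sum>k<K. (2 * real k + 2) * a k) \<le> 4 * C"
proof -
  have "a k \<le> C / \<beta> ^ k" for k
    using assms(1,3) by (simp add: pos_le_divide_eq)
  then have "(\<Sum>k<K. (2 * real k + 2) * a k) \<le> (\<Sum>k<K. (2 * real k + 2) * (C / \<beta> ^ k))"
    by (intro sum_mono mult_left_mono) auto
  also have "\<dots> = C * (\<Sum>k<K. (2 * real k + 2) / \<beta> ^ k)"
    by (simp add: sum_distrib_left mult_ac)
  also have "\<dots> \<le> C * 4"
    using weighted_geometric_sum_le[OF assms(1)] assms(2) by (rule mult_left_mono)
  finally show ?thesis by simp
qed

lemma sum_square_le_of_geometric_tails: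
  fixes g :: "'a \<Rightarrow> real" and \<beta> A B :: real
  assumes "finite V" and "4 \<le> \<beta>" and "0 \<le> A" and "0 \<le> B"
    and upper: "\<And>k. real (card {v\<in>V. real k + 1/2 < g v}) * \<beta> ^ k \<le> A"
    and lower: "\<And>k. real (card {v\<in>V. real k + 1/2 < - g v}) * \<beta> ^ k \<le> B"
  shows "(\<Sum>v\<in>V. (g v)\<^sup>2) \<le> real (card V) / 4 + 4 * A + 4 * B"
proof -
  define K where "K = nat \<lceil>\<Sum>v\<in>V. \<bar>g v\<bar>\<rceil>"
  have "\<bar>g v\<bar> \<le> real K + 1/2" if "v \<in> V" for v
    using member_le_sum[of v V "\<lambda>v. \<bar>g v\<bar>"] that assms(1) unfolding K_def by simp linarith
  then have "(\<Sum>v\<in>V. (g v)\<^sup>2) \<le> (\<Sum>v\<in>V. 1/4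
      + (\<Sum>k<K. (2 * real k + 2) * of_bool (real k + 1/2 < g v))
      + (\<Sum>k<K. (2 * real k + 2) * of_bool (real k + 1/2 < - g v)))"
    by (intro sum_mono square_le_two_sided_layer_sum) auto
  also have "\<dots> = real (card V) / 4
      + (\<Sum>k<K. (2 * real k + 2) * real (card {v\<in>V. real k + 1/2 < g v}))
      + (\<Sum>k<K. (2 * real k + 2) * real (card {v\<in>V. real k + 1/2 < - g v}))"
    using assms(1) by (simp only: sum.distrib sum_weighted_indicator_swap) simp
  also have "\<dots> \<le> real (card V) / 4 + 4 * A + 4 * B"
    using weighted_tail_sum_le[OF assms(2,3) upper, of K] weighted_tail_sum_le[OF assms(2,4) lower, of K]
    by linarith
  finally show ?thesis .
qed

lemma unif_var_le_mean_square_dev: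
  assumes "finite V"
  shows "unif_var V f \<le> (\<Sum>v\<in>V. (f v - c)\<^sup>2) / real (card V)"
proof (cases "V = {}")
  case False
  define m where "m = (\<Sum>v\<in>V. f v) / real (card V)"
  have "(\<Sum>v\<in>V. f v - m) = 0"
    using assms False by (simp add: sum_subtractf m_def)
  then have "(\<Sum>v\<in>V. (f v - c)\<^sup>2) = (\<Sum>v\<in>V. (f v - m)\<^sup>2) + real (card V) * (m - c)\<^sup>2"
    by (simp add: power2_diff power2_eq_square sum.distrib sum_subtractf
        sum_distrib_left[symmetric] sum_distrib_right[symmetric] algebra_simps)
  then show ?thesis
    unfolding unif_var_def Let_def m_def[symmetric] by (intro divide_right_mono) auto
qed (simp add: unif_var_def)

lemma exists_threshold:
  fixes f :: "'a \<Rightarrow> real"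
  assumes "finite V" and "0 \<le> c" and "c < real (card V)"
  shows "\<exists>x. real (card {v\<in>V. f v < x}) \<le> c \<and> c < real (card {v\<in>V. f v \<le> x})"
proof -
  define X where "X = {x \<in> f ` V. c < real (card {v\<in>V. f v \<le> x})}"
  have finX: "finite X" using assms(1) by (simp add: X_def)
  have "{v\<in>V. f v \<le> Max (f ` V)} = V" using assms(1) by auto
  moreover have "V \<noteq> {}" using assms(2,3) by auto
  ultimately have "Max (f ` V) \<in> X" using assms by (auto simp: X_def)
  then have x: "Min X \<in> X" using finX by (intro Min_in) auto
  have "real (card {v\<in>V. f v < Min X}) \<le> c"
  proof (cases "{v\<in>V. f v < Min X} = {}")
    case False
    define y where "y = Max (f ` {v\<in>V. f v < Min X})"
    have "y \<in> f ` {v\<in>V. f v < Min X}" using False assms(1) unfolding y_def by (intro Max_in) auto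
    then have y: "y \<in> f ` V" "y < Min X" by auto
    then have "y \<notin> X" using finX Min_le by force
    moreover have "f v \<le> y" if "v \<in> V" "f v < Min X" for v
      using that assms(1) unfolding y_def by (intro Max_ge) auto
    then have "{v\<in>V. f v < Min X} = {v\<in>V. f v \<le> y}"
      using y(2) by fastforce
    ultimately show ?thesis using y(1) by (simp add: X_def)
  qed (simp only: card.empty of_nat_0 assms(2))
  with x show ?thesis unfolding X_def by blast
qed

lemma exists_balanced_threshold:
  fixes f :: "'a \<Rightarrow> real" and \<beta> :: real
  assumes "finite V" and "4 \<le> \<beta>" and "4 * \<beta> < real (card V)"
  obtains x where "real (card {v\<in>V. f v < x}) \<le> real (card V) / \<beta> + \<beta>"
    and "real (card {v\<in>V. x < f v}) < (1 - 1/\<beta>) * real (card V) - \<beta>"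
    and "real (card {v\<in>V. f v < x}) < (1 - 1/\<beta>) * real (card V) - \<beta>"
proof -
  define n where "n = real (card V)"
  define c where "c = n / \<beta> + \<beta>"
  have "n / \<beta> \<le> n / 4"
    using assms(2,3) unfolding n_def by (intro divide_left_mono) auto
  moreover have "(1 - 1/\<beta>) * n = n - n / \<beta>"
    by (simp add: algebra_simps)
  ultimately have c_small: "c < (1 - 1/\<beta>) * n - \<beta>"
    using assms(3) unfolding c_def n_def by linarith
  have "0 \<le> n / \<beta>" using assms(2) unfolding n_def by simp
  then have "0 \<le> c" "c < n"
    using assms(2) c_small \<open>(1 - 1/\<beta>) * n = n - n / \<beta>\<close> unfolding c_def by linarith+
  then obtain x where below: "real (card {v\<in>V. f v < x}) \<le> c"
    and above: "c < real (card {v\<in>V. f v \<le> x})"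
    using exists_threshold[OF assms(1)] unfolding n_def by blast
  have "card {v\<in>V. x < f v} + card {v\<in>V. f v \<le> x} = card V"
    using assms(1) by (subst card_Un_disjoint[symmetric]) (auto intro: arg_cong[where f = card])
  then have "real (card {v\<in>V. x < f v}) + real (card {v\<in>V. f v \<le> x}) = n"
    unfolding n_def by (metis of_nat_add)
  then have "real (card {v\<in>V. x < f v}) < (1 - 1/\<beta>) * n - \<beta>"
    using above \<open>(1 - 1/\<beta>) * n = n - n / \<beta>\<close> unfolding c_def by linarith
  moreover have "real (card {v\<in>V. f v < x}) < (1 - 1/\<beta>) * n - \<beta>"
    using below c_small by linarith
  ultimately show ?thesis
    using below that unfolding c_def n_def by blast
qed

lemma lipschitz_graph_uminus:
  "lipschitz_graph V E f \<Longrightarrow> lipschitz_graph V E (\<lambda>v. - f v)"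
  by (simp add: lipschitz_graph_def abs_minus_commute)

lemma nbhd_mono: "A \<subseteq> B \<Longrightarrow> nbhd V E A \<subseteq> nbhd V E B"
  by (auto simp: nbhd_def)

lemma nbhd_superlevel_subset:
  assumes "lipschitz_graph V E f"
  shows "nbhd V E {v\<in>V. x + 1 < f v} \<subseteq> {v\<in>V. x < f v}"
  using assms by (fastforce simp: nbhd_def lipschitz_graph_def abs_le_iff)

lemma has_expansion_dichotomy:
  assumes sg: "simple_graph V E" and ex: "has_expansion V E \<beta> (1/\<beta>)" and "1 \<le> \<beta>"
    and A: "A \<subseteq> V"
  shows "\<beta> * real (card A) \<le> real (card (A \<union> nbhd V E A))
         \<or> (1 - 1/\<beta>) * real (card V) - \<beta> \<le> real (card (A \<union> nbhd V E A))"
proof -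
  define cap where "cap = (1 - 1/\<beta>) * real (card V) / \<beta>"
  have expand: "\<beta> * real (card T) \<le> real (card (T \<union> nbhd V E T))"
    if "T \<subseteq> V" "real (card T) \<le> cap" for T
    using ex that by (simp add: has_expansion_def cap_def)
  have "0 \<le> 1 - 1/\<beta>" using \<open>1 \<le> \<beta>\<close> by simp
  then have "0 \<le> cap" unfolding cap_def using \<open>1 \<le> \<beta>\<close> by simp
  show ?thesis
  proof (cases "real (card A) \<le> cap")
    case True
    with expand A show ?thesis by blast
  next
    case False
    \<comment> \<open>A is too large for the hypothesis, but a subset of size \<lfloor>cap\<rfloor> is not.\<close>
    then have "nat \<lfloor>cap\<rfloor> \<le> card A" by linarith
    then obtain A' where A': "A' \<subseteq> A" "card A' = nat \<lfloor>cap\<rfloor>"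
      by (rule obtain_subset_with_card_n)
    have "A' \<union> nbhd V E A' \<subseteq> A \<union> nbhd V E A"
      using A'(1) nbhd_mono[OF A'(1)] by blast
    then have "card (A' \<union> nbhd V E A') \<le> card (A \<union> nbhd V E A)"
      using sg A by (intro card_mono) (auto simp: simple_graph_def nbhd_def intro: finite_subset)
    moreover have "\<beta> * real (card A') \<le> real (card (A' \<union> nbhd V E A'))"
      using A \<open>0 \<le> cap\<close> A' by (intro expand) auto
    moreover have "\<beta> * (cap - 1) \<le> \<beta> * real (card A')"
      using A'(2) \<open>0 \<le> cap\<close> \<open>1 \<le> \<beta>\<close> by (intro mult_left_mono) linarith+
    moreover have "\<beta> * (cap - 1) = (1 - 1/\<beta>) * real (card V) - \<beta>"
      unfolding cap_def using \<open>1 \<le> \<beta>\<close> by (simp add: right_diff_distrib)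
    ultimately show ?thesis by linarith
  qed
qed

lemma lipschitz_superlevel_shrinks:
  assumes sg: "simple_graph V E" and ex: "has_expansion V E \<beta> (1/\<beta>)" and "1 \<le> \<beta>"
    and lip: "lipschitz_graph V E f"
    and small: "real (card {v\<in>V. x < f v}) < (1 - 1/\<beta>) * real (card V) - \<beta>"
  shows "\<beta> * real (card {v\<in>V. x + 1 < f v}) \<le> real (card {v\<in>V. x < f v})"
proof -
  let ?A = "{v\<in>V. x + 1 < f v}"
  have "?A \<union> nbhd V E ?A \<subseteq> {v\<in>V. x < f v}"
    using nbhd_superlevel_subset[OF lip] by auto
  then have closure: "real (card (?A \<union> nbhd V E ?A)) \<le> real (card {v\<in>V. x < f v})"
    using sg by (intro of_nat_mono card_mono) (auto simp: simple_graph_def)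
  have "\<not> (1 - 1/\<beta>) * real (card V) - \<beta> \<le> real (card (?A \<union> nbhd V E ?A))"
    unfolding not_le by (rule order.strict_trans1[OF closure small])
  with has_expansion_dichotomy[OF sg ex \<open>1 \<le> \<beta>\<close>, of ?A]
  have "\<beta> * real (card ?A) \<le> real (card (?A \<union> nbhd V E ?A))" by blast
  from this closure show ?thesis by (rule order_trans)
qed

lemma lipschitz_superlevel_decay:
  assumes sg: "simple_graph V E" and ex: "has_expansion V E \<beta> (1/\<beta>)" and "1 \<le> \<beta>"
    and lip: "lipschitz_graph V E f"
    and small: "real (card {v\<in>V. x < f v}) < (1 - 1/\<beta>) * real (card V) - \<beta>"
  shows "real (card {v\<in>V. x + real k < f v}) * \<beta> ^ k \<le> real (card {v\<in>V. x < f v})"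
proof (induction k)
  case (Suc k)
  have "card {v\<in>V. x + real k < f v} \<le> card {v\<in>V. x < f v}"
    using sg by (intro card_mono) (auto simp: simple_graph_def)
  then have "\<beta> * real (card {v\<in>V. x + real k + 1 < f v}) \<le> real (card {v\<in>V. x + real k < f v})"
    using small by (intro lipschitz_superlevel_shrinks[OF sg ex \<open>1 \<le> \<beta>\<close> lip]) linarith
  then have "\<beta> * real (card {v\<in>V. x + real k + 1 < f v}) * \<beta> ^ k
      \<le> real (card {v\<in>V. x + real k < f v}) * \<beta> ^ k"
    using \<open>1 \<le> \<beta>\<close> by (intro mult_right_mono) auto
  also have "\<dots> \<le> real (card {v\<in>V. x < f v})"
    by (rule Suc)
  finally show ?case
    by (simp only: of_nat_Suc power_Suc add.assoc add.commute[of 1] mult_ac)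
qed simp

lemma unif_var_le_of_expansion:
  assumes sg: "simple_graph V E" and ex: "has_expansion V E \<beta> (1/\<beta>)" and "4 \<le> \<beta>"
    and large: "4 * \<beta> < real (card V)" and lip: "lipschitz_graph V E f"
  shows "unif_var V f \<le> 1/4 + 8/\<beta> + 4 * \<beta> / real (card V)"
proof -
  define n where "n = real (card V)"
  have fin: "finite V" using sg by (simp add: simple_graph_def)
  have "1 \<le> \<beta>" using \<open>4 \<le> \<beta>\<close> by simp
  obtain x where below: "real (card {v\<in>V. f v < x}) \<le> n / \<beta> + \<beta>"
    and above: "real (card {v\<in>V. x < f v}) < (1 - 1/\<beta>) * n - \<beta>"
    and below_small: "real (card {v\<in>V. f v < x}) < (1 - 1/\<beta>) * n - \<beta>"
    using exists_balanced_threshold[OF fin \<open>4 \<le> \<beta>\<close> large] unfolding n_def by blast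
  define g where "g v = f v - (x + 1/2)" for v
  have upper: "real (card {v\<in>V. real k + 1/2 < g v}) * \<beta> ^ k \<le> n / \<beta>" for k
  proof -
    have "{v\<in>V. real k + 1/2 < g v} = {v\<in>V. x + real (Suc k) < f v}"
      by (auto simp: g_def)
    then have "real (card {v\<in>V. real k + 1/2 < g v}) * \<beta> ^ Suc k \<le> real (card {v\<in>V. x < f v})"
      using lipschitz_superlevel_decay[OF sg ex \<open>1 \<le> \<beta>\<close> lip above[unfolded n_def], of "Suc k"] by simp
    also have "\<dots> \<le> n"
      unfolding n_def using fin by (intro of_nat_mono card_mono) auto
    finally show ?thesis
      using \<open>1 \<le> \<beta>\<close> by (simp add: pos_le_divide_eq mult_ac)
  qed
  have lower: "real (card {v\<in>V. real k + 1/2 < - g v}) * \<beta> ^ k \<le> n / \<beta> + \<beta>" for k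
  proof -
    have "{v\<in>V. real k + 1/2 < - g v} = {v\<in>V. - x + real k < - f v}"
      "{v\<in>V. - x < - f v} = {v\<in>V. f v < x}"
      by (auto simp: g_def)
    then show ?thesis
      using lipschitz_superlevel_decay[OF sg ex \<open>1 \<le> \<beta>\<close> lipschitz_graph_uminus[OF lip], of "- x" k]
        below below_small unfolding n_def by fastforce
  qed
  have "0 < n" using large \<open>4 \<le> \<beta>\<close> unfolding n_def by linarith
  then have squares: "(\<Sum>v\<in>V. (g v)\<^sup>2) \<le> n / 4 + 4 * (n / \<beta>) + 4 * (n / \<beta> + \<beta>)"
    using sum_square_le_of_geometric_tails[OF fin \<open>4 \<le> \<beta>\<close> _ _ upper lower] \<open>4 \<le> \<beta>\<close>
    unfolding n_def by simp
  have "unif_var V f \<le> (\<Sum>v\<in>V. (g v)\<^sup>2) / n"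
    unfolding g_def n_def by (rule unif_var_le_mean_square_dev[OF fin])
  also have "\<dots> \<le> (n / 4 + 4 * (n / \<beta>) + 4 * (n / \<beta> + \<beta>)) / n"
    using \<open>0 < n\<close> squares by (intro divide_right_mono) auto
  also have "\<dots> = 1/4 + 8/\<beta> + 4 * \<beta> / n"
    using \<open>0 < n\<close> \<open>4 \<le> \<beta>\<close> by (simp add: field_simps)
  finally show ?thesis unfolding n_def .
qed

lemma spr_le_of_expansion:
  assumes "simple_graph V E" and "has_expansion V E \<beta> (1/\<beta>)" and "4 \<le> \<beta>"
    and "4 * \<beta> < real (card V)"
  shows "spr V E \<le> ereal (1/4 + 8/\<beta> + 4 * \<beta> / real (card V))"
  unfolding spr_def using unif_var_le_of_expansion[OF assms] by (intro SUP_least) auto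

theorem lemma5p5:
  fixes \<epsilon> :: real
  assumes "\<epsilon> > 0"
  shows "\<exists>\<beta>::real. \<beta> > 1 \<and> (\<exists>n0::nat. \<forall>(V::nat set) E.
           simple_graph V E \<and> card V \<ge> n0 \<and> has_expansion V E \<beta> (1 / \<beta>)
           \<longrightarrow> spr V E < ereal (1/4 + \<epsilon>))"
proof -
  define \<beta> where "\<beta> = 4 + 16 / \<epsilon>"
  define n0 where "n0 = nat \<lceil>4 * \<beta> + 16 * \<beta> / \<epsilon>\<rceil> + 1"
  have "4 \<le> \<beta>" and "8 / \<beta> \<le> \<epsilon> / 2"
    using assms unfolding \<beta>_def by (simp_all add: field_simps)
  have "spr V E < ereal (1/4 + \<epsilon>)"
    if "simple_graph V E" and "n0 \<le> card V" and "has_expansion V E \<beta> (1 / \<beta>)"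
    for V :: "nat set" and E
  proof -
    have "0 \<le> 16 * \<beta> / \<epsilon>" using assms \<open>4 \<le> \<beta>\<close> by simp
    then have "4 * \<beta> < real (card V)" and "16 * \<beta> / \<epsilon> \<le> real (card V)"
      using \<open>n0 \<le> card V\<close> \<open>4 \<le> \<beta>\<close> unfolding n0_def by linarith+
    then have "4 * \<beta> / real (card V) \<le> \<epsilon> / 4"
      using assms \<open>4 \<le> \<beta>\<close> by (simp add: field_simps)
    with \<open>8 / \<beta> \<le> \<epsilon> / 2\<close> assms have "ereal (1/4 + 8/\<beta> + 4 * \<beta> / real (card V)) < ereal (1/4 + \<epsilon>)"
      by simp
    with spr_le_of_expansion[OF that(1,3) \<open>4 \<le> \<beta>\<close> \<open>4 * \<beta> < real (card V)\<close>] show ?thesis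
      by (rule le_less_trans)
  qed
  moreover have "\<beta> > 1" using \<open>4 \<le> \<beta>\<close> by simp
  ultimately show ?thesis by blast
qed

end
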